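(* Let $(R_0,R_1,s,t,i,\circ)$ be a strict $2$-rack. Put $R:=R_1$ and $N:=i(R_0)\subset R_1$, and consider the maps $i\circ s,\ i\circ t:R\to N$. Then $N$ is a subrack of $R$, $i\circ s$ and $i\circ t$ are rack morphisms whose restrictions to $N$ are the identity of $N$, and $\ker(s)$ and $\ker(t)$ act trivially on each other (i.e. $f\lhd g=f$ and $g\lhd f=g$ for $f\in\ker(t)$, $g\in\ker(s)$). Thus $(R,N,i\circ s,i\circ t)$ is a 1-cat rack.
   Context: A (right) rack is a set with a binary operation $\lhd$ such that each $x\mapsto x\lhd y$ is bijective and $(x\lhd y)\lhd z=(x\lhd z)\lhd(y\lhd z)$; it is pointed if it has an element $1$ with $1\lhd x=1$ and $x\lhd 1=x$ for all $x$. A strict $2$-rack is a category object in racks: pointed racks $R_0$, $R_1$ with morphisms of pointed racks $s,t:R_1\to R_0$, $i:R_0\to R_1$ and a composition $\circ:R_1\times_{R_0}R_1\to R_1$ (on pairs $(g,f)$ with $s(g)=t(f)$) that is a rack morphism for the componentwise rack structure, satisfying the category axioms ($s\circ i=t\circ i=\mathrm{id}$, associativity, identities). $\ker(s)=s^{-1}(1)$, $\ker(t)=t^{-1}(1)$. A 1-cat rack consists of a pointed rack $R$, a subrack $N$ and two rack morphisms $s',t':R\to N$ with $s'|_N=t'|_N=\mathrm{id}_N$ such that $\ker(s')$ and $\ker(t')$ act trivially on each other. *)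

theory Defs
  imports Main
begin

text \<open>Racks are represented by a carrier set and a binary operation (written x \<lhd> y as op x y).\<close>

definition rack :: "'a set \<Rightarrow> ('a \<Rightarrow> 'a \<Rightarrow> 'a) \<Rightarrow> bool" where
  "rack A op \<longleftrightarrow>
     (\<forall>x\<in>A. \<forall>y\<in>A. op x y \<in> A) \<and>
     (\<forall>y\<in>A. bij_betw (\<lambda>x. op x y) A A) \<and>
     (\<forall>x\<in>A. \<forall>y\<in>A. \<forall>z\<in>A. op (op x y) z = op (op x z) (op y z))"

definition pointed_rack :: "'a set \<Rightarrow> ('a \<Rightarrow> 'a \<Rightarrow> 'a) \<Rightarrow> 'a \<Rightarrow> bool" where
  "pointed_rack A op e \<longleftrightarrow> rack A op \<and> e \<in> A \<and>
     (\<forall>x\<in>A. op e x = e \<and> op x e = x)"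

definition rack_hom :: "'a set \<Rightarrow> ('a \<Rightarrow> 'a \<Rightarrow> 'a) \<Rightarrow> 'b set \<Rightarrow> ('b \<Rightarrow> 'b \<Rightarrow> 'b) \<Rightarrow> ('a \<Rightarrow> 'b) \<Rightarrow> bool" where
  "rack_hom A opA B opB f \<longleftrightarrow> (\<forall>x\<in>A. f x \<in> B) \<and>
     (\<forall>x\<in>A. \<forall>y\<in>A. f (opA x y) = opB (f x) (f y))"

definition pointed_rack_hom :: "'a set \<Rightarrow> ('a \<Rightarrow> 'a \<Rightarrow> 'a) \<Rightarrow> 'a \<Rightarrow> 'b set \<Rightarrow> ('b \<Rightarrow> 'b \<Rightarrow> 'b) \<Rightarrow> 'b \<Rightarrow> ('a \<Rightarrow> 'b) \<Rightarrow> bool" where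
  "pointed_rack_hom A opA eA B opB eB f \<longleftrightarrow> rack_hom A opA B opB f \<and> f eA = eB"

definition subrack :: "'a set \<Rightarrow> 'a set \<Rightarrow> ('a \<Rightarrow> 'a \<Rightarrow> 'a) \<Rightarrow> bool" where
  "subrack N A op \<longleftrightarrow> N \<subseteq> A \<and> rack N op"

text \<open>Strict 2-rack: category object in pointed racks. The composition cmp g f is
  defined on pairs with s g = t f (the fibre product R1 \<times>_R0 R1 with componentwise rack structure).\<close>
definition strict_2rack ::
  "'a set \<Rightarrow> ('a \<Rightarrow> 'a \<Rightarrow> 'a) \<Rightarrow> 'a \<Rightarrow> 'b set \<Rightarrow> ('b \<Rightarrow> 'b \<Rightarrow> 'b) \<Rightarrow> 'b \<Rightarrow>
   ('b \<Rightarrow> 'a) \<Rightarrow> ('b \<Rightarrow> 'a) \<Rightarrow> ('a \<Rightarrow> 'b) \<Rightarrow> ('b \<Rightarrow> 'b \<Rightarrow> 'b) \<Rightarrow> bool" where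
  "strict_2rack R0 op0 e0 R1 op1 e1 s t i cmp \<longleftrightarrow>
     pointed_rack R0 op0 e0 \<and> pointed_rack R1 op1 e1 \<and>
     pointed_rack_hom R1 op1 e1 R0 op0 e0 s \<and>
     pointed_rack_hom R1 op1 e1 R0 op0 e0 t \<and>
     pointed_rack_hom R0 op0 e0 R1 op1 e1 i \<and>
     (\<forall>g\<in>R1. \<forall>f\<in>R1. s g = t f \<longrightarrow> cmp g f \<in> R1) \<and>
     (\<forall>g\<in>R1. \<forall>f\<in>R1. \<forall>g'\<in>R1. \<forall>f'\<in>R1. s g = t f \<longrightarrow> s g' = t f' \<longrightarrow>
        cmp (op1 g g') (op1 f f') = op1 (cmp g f) (cmp g' f')) \<and>
     (\<forall>x\<in>R0. s (i x) = x \<and> t (i x) = x) \<and>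
     (\<forall>g\<in>R1. \<forall>f\<in>R1. s g = t f \<longrightarrow> s (cmp g f) = s f \<and> t (cmp g f) = t g) \<and>
     (\<forall>h\<in>R1. \<forall>g\<in>R1. \<forall>f\<in>R1. s h = t g \<longrightarrow> s g = t f \<longrightarrow>
        cmp (cmp h g) f = cmp h (cmp g f)) \<and>
     (\<forall>f\<in>R1. cmp (i (t f)) f = f \<and> cmp f (i (s f)) = f)"

definition rack_kernel :: "'b set \<Rightarrow> ('b \<Rightarrow> 'a) \<Rightarrow> 'a \<Rightarrow> 'b set" where
  "rack_kernel A f e = {x\<in>A. f x = e}"

definition onecat_rack ::
  "'a set \<Rightarrow> ('a \<Rightarrow> 'a \<Rightarrow> 'a) \<Rightarrow> 'a \<Rightarrow> 'a set \<Rightarrow> ('a \<Rightarrow> 'a) \<Rightarrow> ('a \<Rightarrow> 'a) \<Rightarrow> bool" where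
  "onecat_rack R op e N s' t' \<longleftrightarrow>
     pointed_rack R op e \<and> subrack N R op \<and>
     rack_hom R op N op s' \<and> rack_hom R op N op t' \<and>
     (\<forall>x\<in>N. s' x = x \<and> t' x = x) \<and>
     (\<forall>f\<in>rack_kernel R s' e. \<forall>g\<in>rack_kernel R t' e. op f g = f \<and> op g f = g)"

end

theory Submission
  imports Defs
begin

text \<open>The subrack, morphism and identity conditions hold because i is a rack morphism with
  retractions s and t. For the kernels, a morphism f with t f = 1 factors as 1 \<circ> f and one
  with s g = 1 as g \<circ> 1; since composition is a rack morphism (the interchange law),
  f \<lhd> g = (1 \<lhd> g) \<circ> (f \<lhd> 1) = 1 \<circ> f = f, and symmetrically g \<lhd> f = g.\<close>

lemma subrack_image_rack_hom:
  assumes A: "rack A opA" and B: "rack B opB" and i: "rack_hom A opA B opB i"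
  shows "subrack (i ` A) B opB"
proof -
  have iB: "i ` A \<subseteq> B" and ih: "\<And>x y. x \<in> A \<Longrightarrow> y \<in> A \<Longrightarrow> i (opA x y) = opB (i x) (i y)"
    using i unfolding rack_hom_def by auto
  have clA: "\<And>x y. x \<in> A \<Longrightarrow> y \<in> A \<Longrightarrow> opA x y \<in> A"
    and bijA: "\<And>y. y \<in> A \<Longrightarrow> bij_betw (\<lambda>x. opA x y) A A"
    using A unfolding rack_def by blast+
  have bijB: "\<And>y. y \<in> B \<Longrightarrow> bij_betw (\<lambda>x. opB x y) B B"
    and sdB: "\<And>x y z. x \<in> B \<Longrightarrow> y \<in> B \<Longrightarrow> z \<in> B \<Longrightarrow> opB (opB x y) z = opB (opB x z) (opB y z)"
    using B unfolding rack_def by blast+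
  have translation_image: "(\<lambda>x. opB x (i b)) ` i ` A = i ` A" if b: "b \<in> A" for b
  proof -
    have "(\<lambda>x. opB x (i b)) ` i ` A = i ` (\<lambda>x. opA x b) ` A"
      using b by (auto simp: image_image ih)
    also have "\<dots> = i ` A"
      using bijA[OF b] by (simp add: bij_betw_def)
    finally show ?thesis .
  qed
  have "bij_betw (\<lambda>x. opB x y) (i ` A) (i ` A)" if y: "y \<in> i ` A" for y
  proof -
    obtain b where b: "b \<in> A" "y = i b" using y by auto
    have "inj_on (\<lambda>x. opB x y) (i ` A)"
      using bijB[of y] y iB by (meson bij_betw_def inj_on_subset subsetD)
    then show ?thesis
      using translation_image[OF b(1)] b(2) by (simp add: bij_betw_def)
  qed
  moreover have "opB x y \<in> i ` A" if "x \<in> i ` A" "y \<in> i ` A" for x y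
    using that clA by (auto simp flip: ih)
  moreover have "opB (opB x y) z = opB (opB x z) (opB y z)"
    if "x \<in> i ` A" "y \<in> i ` A" "z \<in> i ` A" for x y z
    using that iB by (meson sdB subsetD)
  ultimately show ?thesis
    using iB unfolding subrack_def rack_def by blast
qed

lemma rack_hom_comp_into_image:
  assumes "rack_hom A opA B opB f" and "rack_hom B opB C opC g"
  shows "rack_hom A opA (g ` B) opC (g \<circ> f)"
  using assms unfolding rack_hom_def by auto

lemma rack_kernel_comp_inj:
  assumes "inj_on i B" and "\<forall>x\<in>A. f x \<in> B" and "e \<in> B"
  shows "rack_kernel A (i \<circ> f) (i e) = rack_kernel A f e"
  using assms unfolding rack_kernel_def inj_on_def by auto

lemma strict_2rack_kernels_act_trivially:
  assumes "strict_2rack R0 op0 e0 R1 op1 e1 s t i cmp"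
    and f: "f \<in> R1" "t f = e0" and g: "g \<in> R1" "s g = e0"
  shows "op1 f g = f \<and> op1 g f = g"
proof -
  have P1: "pointed_rack R1 op1 e1"
    and s_e1: "s e1 = e0" and t_e1: "t e1 = e0" and i_e0: "i e0 = e1"
    and interchange: "\<And>g f g' f'. \<lbrakk>g \<in> R1; f \<in> R1; g' \<in> R1; f' \<in> R1; s g = t f; s g' = t f'\<rbrakk>
        \<Longrightarrow> cmp (op1 g g') (op1 f f') = op1 (cmp g f) (cmp g' f')"
    and unit: "\<And>f. f \<in> R1 \<Longrightarrow> cmp (i (t f)) f = f \<and> cmp f (i (s f)) = f"
    using assms(1) unfolding strict_2rack_def pointed_rack_hom_def by blast+
  have e1: "e1 \<in> R1" and e1_left: "\<And>x. x \<in> R1 \<Longrightarrow> op1 e1 x = e1"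
    and e1_right: "\<And>x. x \<in> R1 \<Longrightarrow> op1 x e1 = x"
    using P1 unfolding pointed_rack_def by blast+
  have f_unit: "cmp e1 f = f" using unit[OF f(1)] f(2) i_e0 by simp
  have g_unit: "cmp g e1 = g" using unit[OF g(1)] g(2) i_e0 by simp
  have "op1 f g = op1 (cmp e1 f) (cmp g e1)" using f_unit g_unit by simp
  also have "\<dots> = cmp (op1 e1 g) (op1 f e1)"
    using interchange[OF e1 f(1) g(1) e1] s_e1 t_e1 f(2) g(2) by simp
  also have "\<dots> = f" using e1_left[OF g(1)] e1_right[OF f(1)] f_unit by simp
  finally have fg: "op1 f g = f" .
  have "op1 g f = op1 (cmp g e1) (cmp e1 f)" using f_unit g_unit by simp
  also have "\<dots> = cmp (op1 g e1) (op1 e1 f)"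
    using interchange[OF g(1) e1 e1 f(1)] s_e1 t_e1 f(2) g(2) by simp
  also have "\<dots> = g" using e1_left[OF f(1)] e1_right[OF g(1)] g_unit by simp
  finally show ?thesis using fg by simp
qed

theorem mainTheorem4:
  fixes R0 :: "'a set" and op0 :: "'a \<Rightarrow> 'a \<Rightarrow> 'a" and e0 :: 'a
    and R1 :: "'b set" and op1 :: "'b \<Rightarrow> 'b \<Rightarrow> 'b" and e1 :: 'b
    and s t :: "'b \<Rightarrow> 'a" and i :: "'a \<Rightarrow> 'b" and cmp :: "'b \<Rightarrow> 'b \<Rightarrow> 'b"
  assumes "strict_2rack R0 op0 e0 R1 op1 e1 s t i cmp"
  shows "subrack (i ` R0) R1 op1
    \<and> rack_hom R1 op1 (i ` R0) op1 (i \<circ> s)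
    \<and> rack_hom R1 op1 (i ` R0) op1 (i \<circ> t)
    \<and> (\<forall>x\<in>i ` R0. (i \<circ> s) x = x \<and> (i \<circ> t) x = x)
    \<and> (\<forall>f\<in>rack_kernel R1 t e0. \<forall>g\<in>rack_kernel R1 s e0. op1 f g = f \<and> op1 g f = g)
    \<and> onecat_rack R1 op1 e1 (i ` R0) (i \<circ> s) (i \<circ> t)"
proof -
  have P0: "pointed_rack R0 op0 e0" and P1: "pointed_rack R1 op1 e1"
    and s: "rack_hom R1 op1 R0 op0 s" and t: "rack_hom R1 op1 R0 op0 t"
    and i: "rack_hom R0 op0 R1 op1 i" and i_e0: "i e0 = e1"
    and retract: "\<forall>x\<in>R0. s (i x) = x \<and> t (i x) = x"
    using assms unfolding strict_2rack_def pointed_rack_hom_def by blast+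
  have sub: "subrack (i ` R0) R1 op1"
    using P0 P1 i by (intro subrack_image_rack_hom) (auto simp: pointed_rack_def)
  have hom_s: "rack_hom R1 op1 (i ` R0) op1 (i \<circ> s)"
    and hom_t: "rack_hom R1 op1 (i ` R0) op1 (i \<circ> t)"
    using rack_hom_comp_into_image i s t by blast+
  have id_N: "\<forall>x\<in>i ` R0. (i \<circ> s) x = x \<and> (i \<circ> t) x = x"
    using retract by auto
  have kernels: "\<forall>f\<in>rack_kernel R1 t e0. \<forall>g\<in>rack_kernel R1 s e0. op1 f g = f \<and> op1 g f = g"
    using strict_2rack_kernels_act_trivially[OF assms] by (simp add: rack_kernel_def)
  have "inj_on i R0" using retract by (metis inj_on_inverseI)
  then have ker_s: "rack_kernel R1 (i \<circ> s) e1 = rack_kernel R1 s e0"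
    and ker_t: "rack_kernel R1 (i \<circ> t) e1 = rack_kernel R1 t e0"
    using rack_kernel_comp_inj[of i R0 R1 _ e0] s t P0 i_e0
    unfolding rack_hom_def pointed_rack_def by auto
  have "onecat_rack R1 op1 e1 (i ` R0) (i \<circ> s) (i \<circ> t)"
    unfolding onecat_rack_def ker_s ker_t using P1 sub hom_s hom_t id_N kernels by blast
  with sub hom_s hom_t id_N kernels show ?thesis by (intro conjI)
qed

end
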